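(* Let $(x_1,y_1),\dots,(x_m,y_m)$ be observations with $x_i\in[N]$ and labels $y_i\in[0,M]$. For $j\in[N]$ let $\mu(j)=\frac{\sum_i[x_i\le j]y_i}{\sum_i[x_i\le j]}$, $\gamma(j)=\frac{\sum_i[x_i>j]y_i}{\sum_i[x_i>j]}$ and $L(j)=\frac1m\Big(\sum_{i=1}^m[x_i\le j](y_i-\mu(j))^2+\sum_{i=1}^m[x_i>j](y_i-\gamma(j))^2\Big)$. Then for any $j'>j$, setting $b=\sum_{i=1}^m[j<x_i\le j']$, we have $L(j')\le L(j)+\frac{5bM^2}{4m}$.
   Context: $[N]=\{1,\dots,N\}$ and $[E]$ denotes the indicator of event $E$. If one side of a split is empty, the corresponding sum is empty and contributes $0$. *)

theory Defs
  imports Complex_Main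
begin

text \<open>Observations are indexed by i in {1..m}: x i is the feature, y i the label.
  Division by zero is 0 in Isabelle; this only arises when the corresponding sum
  is empty, in which case the term contributes 0 anyway.\<close>

definition mu :: "nat \<Rightarrow> (nat \<Rightarrow> nat) \<Rightarrow> (nat \<Rightarrow> real) \<Rightarrow> nat \<Rightarrow> real" where
  "mu m x y j = (\<Sum>i\<in>{1..m}. (if x i \<le> j then y i else 0)) /
                (\<Sum>i\<in>{1..m}. (if x i \<le> j then 1 else 0))"

definition gam :: "nat \<Rightarrow> (nat \<Rightarrow> nat) \<Rightarrow> (nat \<Rightarrow> real) \<Rightarrow> nat \<Rightarrow> real" where
  "gam m x y j = (\<Sum>i\<in>{1..m}. (if x i > j then y i else 0)) /
                 (\<Sum>i\<in>{1..m}. (if x i > j then 1 else 0))"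

definition Lsplit :: "nat \<Rightarrow> (nat \<Rightarrow> nat) \<Rightarrow> (nat \<Rightarrow> real) \<Rightarrow> nat \<Rightarrow> real" where
  "Lsplit m x y j = (1 / real m) *
     ((\<Sum>i\<in>{1..m}. (if x i \<le> j then (y i - mu m x y j)^2 else 0)) +
      (\<Sum>i\<in>{1..m}. (if x i > j then (y i - gam m x y j)^2 else 0)))"

end

theory Submission
  imports Defs
begin

text \<open>The within-group sum of squared deviations is minimised by the group mean.
  Moving the split from j to j' removes the b points with j < x i \<le> j' from the right group,
  which cannot increase its minimal sum, and adds them to the left group; keeping the old left
  mean as a (suboptimal) centre, each added point costs at most M^2 since label and mean lie
  in [0, M]. This gives the sharper bound L(j') \<le> L(j) + b M^2 / m.\<close>

definition mean :: "('a \<Rightarrow> real) \<Rightarrow> 'a set \<Rightarrow> real" where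
  "mean y T = sum y T / real (card T)"

definition sq_dev :: "('a \<Rightarrow> real) \<Rightarrow> 'a set \<Rightarrow> real \<Rightarrow> real" where
  "sq_dev y T c = (\<Sum>i\<in>T. (y i - c)^2)"

lemma sq_dev_mean_le:
  assumes "finite T"
  shows "sq_dev y T (mean y T) \<le> sq_dev y T c"
proof -
  define a where "a = mean y T"
  have centred: "(\<Sum>i\<in>T. y i - a) = 0"
    using assms by (cases "T = {}") (simp_all add: sum_subtractf a_def mean_def)
  have "sq_dev y T c = (\<Sum>i\<in>T. (y i - a)^2 + 2 * (a - c) * (y i - a) + (a - c)^2)"
    unfolding sq_dev_def by (rule sum.cong) (simp_all add: power2_eq_square algebra_simps)
  also have "\<dots> = sq_dev y T a + 2 * (a - c) * (\<Sum>i\<in>T. y i - a) + real (card T) * (a - c)^2"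
    by (simp add: sq_dev_def sum.distrib sum_distrib_left)
  also have "\<dots> \<ge> sq_dev y T a"
    using centred by simp
  finally show ?thesis
    unfolding a_def .
qed

lemma sq_dev_mono_set:
  assumes "finite S" "T \<subseteq> S"
  shows "sq_dev y T c \<le> sq_dev y S c"
  unfolding sq_dev_def using assms by (intro sum_mono2) auto

lemma sq_dev_union_disjoint:
  assumes "finite A" "finite B" "A \<inter> B = {}"
  shows "sq_dev y (A \<union> B) c = sq_dev y A c + sq_dev y B c"
  unfolding sq_dev_def using assms by (rule sum.union_disjoint)

lemma sq_dev_le_card_mult:
  assumes "\<And>i. i \<in> T \<Longrightarrow> \<bar>y i - c\<bar> \<le> M"
  shows "sq_dev y T c \<le> real (card T) * M^2"
proof -
  have "sq_dev y T c \<le> (\<Sum>i\<in>T. M^2)"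
    unfolding sq_dev_def
  proof (rule sum_mono)
    fix i
    assume "i \<in> T"
    with assms have "\<bar>y i - c\<bar> \<le> \<bar>M\<bar>" by force
    then show "(y i - c)^2 \<le> M^2" by (simp add: abs_le_square_iff)
  qed
  then show ?thesis by simp
qed

lemma mean_nonneg_le:
  assumes "0 \<le> M" and "\<And>i. i \<in> T \<Longrightarrow> 0 \<le> y i \<and> y i \<le> M"
  shows "0 \<le> mean y T \<and> mean y T \<le> M"
proof (cases "finite T \<and> T \<noteq> {}")
  case True
  have "0 \<le> sum y T" using assms(2) by (intro sum_nonneg) blast
  moreover have "sum y T \<le> real (card T) * M"
    using sum_mono[of T y "\<lambda>_. M"] assms(2) by auto
  ultimately show ?thesis
    using True by (simp add: mean_def pos_divide_le_eq card_gt_0_iff mult.commute)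
qed (use assms(1) in \<open>auto simp: mean_def\<close>)

lemma min_sq_dev_mono:
  assumes "finite S" "T \<subseteq> S"
  shows "sq_dev y T (mean y T) \<le> sq_dev y S (mean y S)"
proof -
  have "sq_dev y T (mean y T) \<le> sq_dev y T (mean y S)"
    using assms by (intro sq_dev_mean_le) (rule finite_subset)
  also have "\<dots> \<le> sq_dev y S (mean y S)"
    using assms by (rule sq_dev_mono_set)
  finally show ?thesis .
qed

lemma min_sq_dev_union_le:
  assumes "finite A" "finite B" "A \<inter> B = {}"
    and "\<And>i. i \<in> A \<union> B \<Longrightarrow> 0 \<le> y i \<and> y i \<le> M"
  shows "sq_dev y (A \<union> B) (mean y (A \<union> B)) \<le> sq_dev y A (mean y A) + real (card B) * M^2"
proof (cases "B = {}")
  case False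
  then have "0 \<le> M" using assms(4) by force
  then have "0 \<le> mean y A \<and> mean y A \<le> M"
    using assms(4) by (intro mean_nonneg_le) auto
  then have cost: "sq_dev y B (mean y A) \<le> real (card B) * M^2"
    using assms(4) by (intro sq_dev_le_card_mult) force
  have "sq_dev y (A \<union> B) (mean y (A \<union> B)) \<le> sq_dev y (A \<union> B) (mean y A)"
    using assms by (intro sq_dev_mean_le) simp
  also have "\<dots> = sq_dev y A (mean y A) + sq_dev y B (mean y A)"
    using assms(1-3) by (rule sq_dev_union_disjoint)
  finally show ?thesis using cost by simp
qed simp

lemma sum_if_eq_sum_filter:
  fixes f :: "nat \<Rightarrow> real"
  shows "(\<Sum>i\<in>{1..m}. if P i then f i else 0) = sum f {i \<in> {1..m}. P i}"
  by (rule sum.inter_filter[symmetric]) simp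

lemma Lsplit_eq_min_sq_dev:
  fixes m j :: nat and x :: "nat \<Rightarrow> nat" and y :: "nat \<Rightarrow> real"
  defines "lower \<equiv> {i \<in> {1..m}. x i \<le> j}" and "upper \<equiv> {i \<in> {1..m}. j < x i}"
  shows "Lsplit m x y j =
    (sq_dev y lower (mean y lower) + sq_dev y upper (mean y upper)) / real m"
  unfolding Lsplit_def mu_def gam_def sum_if_eq_sum_filter lower_def upper_def sq_dev_def mean_def
  by simp

theorem lemma2:
  fixes N m :: nat and x :: "nat \<Rightarrow> nat" and y :: "nat \<Rightarrow> real" and M :: real
    and j j' :: nat
  assumes hx: "\<And>i. i \<in> {1..m} \<Longrightarrow> x i \<in> {1..N}"
    and hy: "\<And>i. i \<in> {1..m} \<Longrightarrow> y i \<in> {0..M}"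
    and hj: "j \<in> {1..N}" and hj': "j' \<in> {1..N}" and hjj: "j < j'"
  shows "Lsplit m x y j' \<le> Lsplit m x y j +
           5 * real (card {i \<in> {1..m}. j < x i \<and> x i \<le> j'}) * M^2 / (4 * real m)"
proof -
  define B where "B = {i \<in> {1..m}. j < x i \<and> x i \<le> j'}"
  let ?L = "\<lambda>k. {i \<in> {1..m}. x i \<le> k}" and ?R = "\<lambda>k. {i \<in> {1..m}. k < x i}"
  let ?min = "\<lambda>T. sq_dev y T (mean y T)"
  have "?L j' = ?L j \<union> B" "?L j \<inter> B = {}" "?R j' \<subseteq> ?R j"
    using hjj by (auto simp: B_def)
  then have "?min (?L j') + ?min (?R j') \<le> ?min (?L j) + ?min (?R j) + real (card B) * M^2"
    using min_sq_dev_union_le[of "?L j" B y M] min_sq_dev_mono[of "?R j" "?R j'" y] hy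
    by (fastforce simp: B_def)
  then have "Lsplit m x y j' \<le> Lsplit m x y j + real (card B) * M^2 / real m"
    by (simp add: Lsplit_eq_min_sq_dev add_divide_distrib[symmetric] divide_right_mono)
  also have "\<dots> \<le> Lsplit m x y j + 5 * real (card B) * M^2 / (4 * real m)"
  proof -
    have "5 * real (card B) * M^2 / (4 * real m) = 5 / 4 * (real (card B) * M^2 / real m)"
      by simp
    moreover have "0 \<le> real (card B) * M^2 / real m" by simp
    ultimately show ?thesis by linarith
  qed
  finally show ?thesis
    unfolding B_def .
qed

end
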